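(* Let $R\subset S$ be an FCP ring extension. Then $\pounds[R,S]\leq \ell[R,S]\leq \mathrm{L}_R(S/R)$.
   Context: All rings are commutative with identity. $[R,S]$ is the lattice of $R$-subalgebras of $S$ (meet = intersection, join = product). FCP: every chain in $[R,S]$ is finite. $T\subset U$ minimal means $[T,U]=\{T,U\}$; atoms of $[R,S]$ are the $T$ with $R\subset T$ minimal; the socle $\mathcal S[R,S]$ is the product of all atoms. The Loewy series: $S_0=R$, $S_{i+1}=\mathcal S[S_i,S]$ while $S_i\neq S$; $\pounds[R,S]$ is the least $n$ with $S_n=S$. $\ell[R,S]$ is the supremum of lengths of chains in $[R,S]$, and $\mathrm{L}_R(S/R)$ is the length of the $R$-module $S/R$. *)

theory Defs
  imports Main "HOL-Library.Extended_Nat"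
begin

text \<open>Rings are subsets of an ambient commutative ring type. A subring contains 0, 1
 and is closed under addition, negation and multiplication.\<close>
definition subring :: "'a::comm_ring_1 set \<Rightarrow> bool" where
  "subring A \<longleftrightarrow> 0 \<in> A \<and> 1 \<in> A \<and> (\<forall>x\<in>A. \<forall>y\<in>A. x + y \<in> A \<and> x * y \<in> A) \<and> (\<forall>x\<in>A. - x \<in> A)"

definition ring_ext :: "'a::comm_ring_1 set \<Rightarrow> 'a set \<Rightarrow> bool" where
  "ring_ext R S \<longleftrightarrow> subring R \<and> subring S \<and> R \<subseteq> S"

text \<open>The lattice [R,S] of R-subalgebras of S, i.e. subrings T with R \<subseteq> T \<subseteq> S.\<close>
definition interm :: "'a::comm_ring_1 set \<Rightarrow> 'a set \<Rightarrow> 'a set set" where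
  "interm R S = {T. subring T \<and> R \<subseteq> T \<and> T \<subseteq> S}"

definition is_chain_in :: "'b set set \<Rightarrow> 'b set set \<Rightarrow> bool" where
  "is_chain_in C X \<longleftrightarrow> C \<subseteq> X \<and> (\<forall>A\<in>C. \<forall>B\<in>C. A \<subseteq> B \<or> B \<subseteq> A)"

definition FCP :: "'a::comm_ring_1 set \<Rightarrow> 'a set \<Rightarrow> bool" where
  "FCP R S \<longleftrightarrow> (\<forall>C. is_chain_in C (interm R S) \<longrightarrow> finite C)"

definition chain_length_sup :: "'b set set \<Rightarrow> enat" where
  "chain_length_sup X = Sup {enat (card C - 1) | C. is_chain_in C X \<and> finite C \<and> C \<noteq> {}}"

definition ell :: "'a::comm_ring_1 set \<Rightarrow> 'a set \<Rightarrow> enat" where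
  "ell R S = chain_length_sup (interm R S)"

definition sgen :: "'a::comm_ring_1 set \<Rightarrow> 'a set" where
  "sgen X = \<Inter>{T. subring T \<and> X \<subseteq> T}"

definition minimal_ext :: "'a::comm_ring_1 set \<Rightarrow> 'a set \<Rightarrow> bool" where
  "minimal_ext T U \<longleftrightarrow> T \<subset> U \<and> interm T U = {T, U}"

definition atoms :: "'a::comm_ring_1 set \<Rightarrow> 'a set \<Rightarrow> 'a set set" where
  "atoms R S = {T \<in> interm R S. minimal_ext R T}"

text \<open>Socle: product of all atoms of [R,S] (the empty product being R).\<close>
definition socle :: "'a::comm_ring_1 set \<Rightarrow> 'a set \<Rightarrow> 'a set" where
  "socle R S = sgen (R \<union> \<Union>(atoms R S))"

fun loewy_series :: "'a::comm_ring_1 set \<Rightarrow> 'a set \<Rightarrow> nat \<Rightarrow> 'a set" where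
  "loewy_series R S 0 = R"
| "loewy_series R S (Suc n) = (if loewy_series R S n = S then S else socle (loewy_series R S n) S)"

definition loewy_length :: "'a::comm_ring_1 set \<Rightarrow> 'a set \<Rightarrow> enat" where
  "loewy_length R S = (if \<exists>n. loewy_series R S n = S then enat (LEAST n. loewy_series R S n = S) else \<infinity>)"

text \<open>R-submodules of S containing R; these correspond bijectively to the R-submodules
 of the R-module S/R.\<close>
definition submods_over :: "'a::comm_ring_1 set \<Rightarrow> 'a set \<Rightarrow> 'a set set" where
  "submods_over R S = {M. R \<subseteq> M \<and> M \<subseteq> S \<and> (\<forall>x\<in>M. \<forall>y\<in>M. x + y \<in> M) \<and> (\<forall>x\<in>M. - x \<in> M)
                         \<and> (\<forall>r\<in>R. \<forall>x\<in>M. r * x \<in> M)}"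

definition mod_length :: "'a::comm_ring_1 set \<Rightarrow> 'a set \<Rightarrow> enat" where
  "mod_length R S = chain_length_sup (submods_over R S)"

end

theory Submission
  imports Defs
begin

text \<open>Under FCP the strict inclusion order on [R,S] is well-founded in both directions. Hence
  every proper extension T \<subset> S has an atom, the socle of [T,S] is strictly larger than T,
  and the Loewy series R = S_0 \<subset> S_1 \<subset> ... strictly increases until it reaches S after
  as many steps as the Loewy length; this chain bounds the Loewy length by \<ell>[R,S]. Since
  every R-subalgebra of S containing R is an R-submodule of S containing R, chains in [R,S]
  are chains of submodules of S/R, which gives \<ell>[R,S] \<le> L_R(S/R).\<close>

lemma subring_sgen: "subring (sgen X)"
  unfolding sgen_def subring_def by auto

lemma sgen_upper: "X \<subseteq> sgen X"
  unfolding sgen_def by auto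

lemma sgen_least: "X \<subseteq> S \<Longrightarrow> subring S \<Longrightarrow> sgen X \<subseteq> S"
  unfolding sgen_def by auto

lemma chain_length_sup_mono: "X \<subseteq> Y \<Longrightarrow> chain_length_sup X \<le> chain_length_sup Y"
  unfolding chain_length_sup_def is_chain_in_def
  by (rule Sup_subset_mono) blast

lemma chain_length_sup_ge_card:
  "is_chain_in C X \<Longrightarrow> finite C \<Longrightarrow> C \<noteq> {} \<Longrightarrow> enat (card C - 1) \<le> chain_length_sup X"
  unfolding chain_length_sup_def by (rule Sup_upper) blast

lemma is_chain_in_mono_image:
  fixes f :: "'a::linorder \<Rightarrow> 'b set"
  assumes "mono f" "f ` A \<subseteq> X"
  shows "is_chain_in (f ` A) X"
proof -
  have comparable: "f a \<subseteq> f b \<or> f b \<subseteq> f a" for a b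
    using le_cases[of a b] by (meson assms(1) monoD)
  show ?thesis
    unfolding is_chain_in_def using assms(2) by (simp add: comparable)
qed

lemma chains_finite_no_inj_chain_seq:
  fixes f :: "nat \<Rightarrow> 'b set"
  assumes "\<And>C. is_chain_in C X \<Longrightarrow> finite C"
    and "range f \<subseteq> X" "inj f" "\<And>i j. f i \<subseteq> f j \<or> f j \<subseteq> f i"
  shows False
proof -
  have "is_chain_in (range f) X"
    unfolding is_chain_in_def using assms(2) by (simp add: assms(4))
  with assms(1) have "finite (range f)" .
  with range_inj_infinite[OF \<open>inj f\<close>] show False
    by contradiction
qed

lemma chains_finite_no_strict_mono_seq:
  assumes "\<And>C. is_chain_in C X \<Longrightarrow> finite C"
    and "range f \<subseteq> X" "strict_mono (f :: nat \<Rightarrow> 'b set)"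
  shows False
proof (rule chains_finite_no_inj_chain_seq[OF assms(1,2)])
  show "inj f"
    using \<open>strict_mono f\<close> by (rule strict_mono_imp_inj_on)
  show "f i \<subseteq> f j \<or> f j \<subseteq> f i" for i j
    using strict_mono_mono[OF \<open>strict_mono f\<close>] by (meson le_cases monoD)
qed

lemma chains_finite_wf_psubset:
  assumes "\<And>C. is_chain_in C X \<Longrightarrow> finite C"
  shows "wf {(A, B). A \<in> X \<and> B \<in> X \<and> A \<subset> B}"
proof (rule ccontr)
  assume "\<not> ?thesis"
  then obtain f where f: "\<And>i. f (Suc i) \<in> X \<and> f i \<in> X \<and> f (Suc i) \<subset> f i"
    unfolding wf_iff_no_infinite_down_chain by blast
  have antimono: "i \<le> j \<Longrightarrow> f j \<subseteq> f i" for i j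
    using lift_Suc_antimono_le[of f] f by blast
  show False
  proof (rule chains_finite_no_inj_chain_seq[OF assms])
    show "range f \<subseteq> X"
      using f by blast
    show "f i \<subseteq> f j \<or> f j \<subseteq> f i" for i j
      using antimono by (meson nle_le)
    show "inj f"
    proof (rule injI)
      show "i = j" if "f i = f j" for i j
      proof (rule ccontr)
        assume "i \<noteq> j"
        then obtain k l where "k < l" "f k = f l"
          using \<open>f i = f j\<close> by (metis linorder_neqE_nat)
        then show False
          using antimono[of "Suc k" l] f[of k] by auto
      qed
    qed
  qed
qed

lemma is_chain_in_mono: "is_chain_in C X \<Longrightarrow> X \<subseteq> Y \<Longrightarrow> is_chain_in C Y"
  unfolding is_chain_in_def by blast

lemma FCP_interm:
  assumes "FCP R S" "T \<in> interm R S"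
  shows "FCP T S"
proof -
  have "interm T S \<subseteq> interm R S"
    using assms(2) unfolding interm_def by auto
  with assms(1) show ?thesis
    unfolding FCP_def by (meson is_chain_in_mono)
qed

lemma ring_ext_interm: "ring_ext R S \<Longrightarrow> T \<in> interm R S \<Longrightarrow> ring_ext T S"
  unfolding ring_ext_def interm_def by auto

lemma atoms_nonempty:
  assumes "ring_ext R S" "FCP R S" "R \<noteq> S"
  shows "atoms R S \<noteq> {}"
proof -
  let ?Q = "interm R S - {R}"
  let ?psub = "{(A, B). A \<in> interm R S \<and> B \<in> interm R S \<and> A \<subset> B}"
  have "wf ?psub"
    using assms(2) unfolding FCP_def by (simp add: chains_finite_wf_psubset)
  moreover have "S \<in> ?Q"
    using assms unfolding ring_ext_def interm_def by auto
  ultimately obtain U where U: "U \<in> ?Q"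
    and U_min: "\<And>V. (V, U) \<in> ?psub \<Longrightarrow> V \<notin> ?Q"
    by (rule wfE_min) blast
  have "interm R U \<subseteq> {R, U}"
  proof
    fix V
    assume "V \<in> interm R U"
    then have "V \<in> interm R S" "V \<subseteq> U"
      using U unfolding interm_def by auto
    then show "V \<in> {R, U}"
      using U U_min[of V] by auto
  qed
  moreover have "{R, U} \<subseteq> interm R U"
    using U assms(1) unfolding interm_def ring_ext_def by auto
  moreover have "R \<subset> U"
    using U unfolding interm_def by auto
  ultimately have "U \<in> atoms R S"
    using U unfolding atoms_def minimal_ext_def by auto
  then show ?thesis
    by auto
qed

lemma socle_in_interm:
  assumes "ring_ext R S"
  shows "socle R S \<in> interm R S"
proof -
  have "R \<union> \<Union>(atoms R S) \<subseteq> S"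
    using assms unfolding atoms_def interm_def ring_ext_def by auto
  then have "socle R S \<subseteq> S"
    unfolding socle_def by (rule sgen_least) (use assms in \<open>simp add: ring_ext_def\<close>)
  moreover have "R \<subseteq> socle R S"
    unfolding socle_def by (rule subset_trans[OF Un_upper1 sgen_upper])
  ultimately show ?thesis
    unfolding interm_def socle_def by (simp add: subring_sgen)
qed

lemma psubset_socle:
  assumes "ring_ext R S" "FCP R S" "R \<noteq> S"
  shows "R \<subset> socle R S"
proof -
  obtain U where U: "U \<in> atoms R S"
    using atoms_nonempty[OF assms] by auto
  then have "R \<subset> U"
    unfolding atoms_def minimal_ext_def by simp
  moreover have "U \<subseteq> socle R S"
    using U sgen_upper[of "R \<union> \<Union>(atoms R S)"] unfolding socle_def by auto
  ultimately show ?thesis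
    by (rule psubset_subset_trans)
qed

lemma loewy_series_in_interm:
  assumes "ring_ext R S"
  shows "loewy_series R S n \<in> interm R S"
proof (induction n)
  case 0
  then show ?case
    using assms unfolding ring_ext_def interm_def by auto
next
  case (Suc n)
  have "socle (loewy_series R S n) S \<in> interm R S"
    using Suc socle_in_interm[OF ring_ext_interm[OF assms Suc]] unfolding interm_def by auto
  moreover have "S \<in> interm R S"
    using assms unfolding ring_ext_def interm_def by auto
  ultimately show ?case
    by simp
qed

lemma loewy_series_subset_Suc:
  assumes "ring_ext R S"
  shows "loewy_series R S n \<subseteq> loewy_series R S (Suc n)"
  using socle_in_interm[OF ring_ext_interm[OF assms loewy_series_in_interm[OF assms]]]
  unfolding interm_def by auto

lemma mono_loewy_series: "ring_ext R S \<Longrightarrow> mono (loewy_series R S)"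
  unfolding mono_iff_le_Suc using loewy_series_subset_Suc by blast

lemma loewy_series_psubset_Suc:
  assumes "ring_ext R S" "FCP R S" "loewy_series R S n \<noteq> S"
  shows "loewy_series R S n \<subset> loewy_series R S (Suc n)"
proof -
  have "loewy_series R S n \<in> interm R S"
    by (rule loewy_series_in_interm[OF assms(1)])
  then show ?thesis
    using psubset_socle[OF ring_ext_interm[OF assms(1)] FCP_interm[OF assms(2)]] assms(3) by simp
qed

lemma loewy_series_reaches_top:
  assumes "ring_ext R S" "FCP R S"
  shows "\<exists>n. loewy_series R S n = S"
proof (rule ccontr)
  assume "\<nexists>n. loewy_series R S n = S"
  then have "strict_mono (loewy_series R S)"
    using loewy_series_psubset_Suc[OF assms] by (simp add: strict_mono_Suc_iff)
  with assms(2) show False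
    using chains_finite_no_strict_mono_seq loewy_series_in_interm[OF assms(1)]
    unfolding FCP_def by blast
qed

lemma loewy_length_le_ell:
  assumes "ring_ext R S" "FCP R S"
  shows "loewy_length R S \<le> ell R S"
proof -
  let ?L = "loewy_series R S"
  define N where "N = (LEAST n. ?L n = S)"
  have LN: "loewy_length R S = enat N"
    unfolding loewy_length_def N_def using loewy_series_reaches_top[OF assms] by simp
  have step: "?L n \<subset> ?L (Suc n)" if "n \<in> {..<N}" for n
  proof (rule loewy_series_psubset_Suc[OF assms])
    show "?L n \<noteq> S"
      using not_less_Least[of n "\<lambda>n. ?L n = S"] that unfolding N_def by simp
  qed
  have "strict_mono_on {..N} ?L"
  proof (rule strict_mono_onI)
    fix i j :: nat
    assume "j \<in> {..N}" "i < j"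
    then have "{i..<j} \<subseteq> {..<N}"
      by auto
    with step \<open>i < j\<close> show "?L i < ?L j"
      by (rule lift_Suc_mono_less_ivl)
  qed
  then have "card (?L ` {..N}) = Suc N"
    by (simp add: card_image strict_mono_on_imp_inj_on)
  moreover have "is_chain_in (?L ` {..N}) (interm R S)"
    by (intro is_chain_in_mono_image mono_loewy_series image_subsetI loewy_series_in_interm assms(1))
  ultimately show ?thesis
    using chain_length_sup_ge_card[of "?L ` {..N}" "interm R S"] LN unfolding ell_def by simp
qed

lemma interm_subset_submods_over: "interm R S \<subseteq> submods_over R S"
  unfolding interm_def submods_over_def subring_def by auto

lemma ell_le_mod_length: "ell R S \<le> mod_length R S"
  unfolding ell_def mod_length_def using interm_subset_submods_over by (rule chain_length_sup_mono)

theorem proposition8p22: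
  fixes R S :: "'a::comm_ring_1 set"
  assumes "ring_ext R S" and "FCP R S"
  shows "loewy_length R S \<le> ell R S \<and> ell R S \<le> mod_length R S"
  using loewy_length_le_ell[OF assms] ell_le_mod_length by blast

end
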